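(* Let $n\ge 2$, $n\ge d\ge 1$, let $\{\tilde V(\theta):\theta\in\Theta\}$ be an ORP of $O(d+1)$ to $e_{d+1}$ with blocks $\tilde V(\theta)=\begin{pmatrix}\tilde O(\theta)&x(\theta)\\ y(\theta)^*&\mu(\theta)\end{pmatrix}$, and $\{\tilde V_d(\phi):\phi\in\Phi\}$ an ORP of $O(d)$ to $e_d$. To each tuple $(\gamma,\theta_1,\dots,\theta_n)$ with $\gamma\in\mathbb{R}$, $|\gamma|\le1$, $\theta_1,\dots,\theta_{n-1}\in\Theta$, $\theta_n\in\Phi$, associate the pair $(A,C)$ where $C$ has first row $(\sqrt{1-\gamma^2},0,\dots,0)$ and $$\begin{pmatrix}C_{2:d,:}\\ A\end{pmatrix}=V^{(1)}(\theta_1)\cdots V^{(n-1)}(\theta_{n-1})V^{(n)}(\theta_n)\begin{pmatrix}0_{d-1,n}\\ P(\gamma)\end{pmatrix},$$ with $V^{(k)}$ and $P(\gamma)$ as defined below. Then this assignment, restricted to tuples with $0<\gamma<1$ and $\mu(\theta_k)>0$ for $1\le k\le n-1$, is a one-to-one correspondence onto the set of strict HOON pairs.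
   Context: ${}^*$ denotes transpose; $C_{2:d,:}$ is the matrix of rows $2,\dots,d$ of $C$. $(A,C)$ ($A$ real $n\times n$, $C$ real $d\times n$) is HOON if $A$ is upper Hessenberg, $C_{1,j}=0$ for $j>1$, and $A^*A=\mathbb{I}_n-C^*C$; it is strict if moreover $A_{i+1,i}>0$ for $1\le i<n$ and $0<C_{1,1}<1$. An orthogonal reduction parameterization (ORP) of $O(m)$ to $e_k$ is a family $\{\tilde Q(\theta):\theta\in\Theta\}$, $\Theta\subset\mathbb{R}^{m-1}$, of real orthogonal $m\times m$ matrices such that for every nonzero $h\in\mathbb{R}^m$ there is a unique $\theta(h)$ with $\tilde Q(\theta)^*h=\|h\|e_k$. For $1\le k<n$, $V^{(k)}(\theta)=\begin{pmatrix}\tilde O(\theta)&0_{d,k-1}&x(\theta)\\ 0_{k-1,d}&\mathbb{I}_{k-1}&0_{k-1,1}\\ y(\theta)^*&0_{1,k-1}&\mu(\theta)\end{pmatrix}\oplus\mathbb{I}_{n-k-1}$, an $(n+d-1)\times(n+d-1)$ matrix; $V^{(n)}(\phi)=\tilde V_d(\phi)\oplus\mathbb{I}_{n-1}$. $P(\gamma)$ is the $n\times n$ matrix with $P_{2,1}=\gamma$, $P_{k+1,k}=1$ for $2\le k<n$, $P_{1,n}=1$, other entries $0$. *)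

theory Defs
  imports "Jordan_Normal_Form.Matrix"
begin

(* Conventions: matrices are Jordan_Normal_Form 'real mat' (0-based indices);
   the paper's 1-based entry M_{i,j} is  M $$ (i-1, j-1).
   Parameters theta in R^(m-1) are 'real vec' of dimension m-1. *)

definition vnorm :: "real vec \<Rightarrow> real" where
  "vnorm h = sqrt (h \<bullet> h)"

definition real_orthogonal :: "nat \<Rightarrow> real mat \<Rightarrow> bool" where
  "real_orthogonal m Q \<longleftrightarrow> Q \<in> carrier_mat m m \<and> transpose_mat Q * Q = 1\<^sub>m m"

definition ORP :: "nat \<Rightarrow> nat \<Rightarrow> (real vec \<Rightarrow> real mat) \<Rightarrow> real vec set \<Rightarrow> bool" where
  "ORP m k Q \<Theta> \<longleftrightarrow>
     \<Theta> \<subseteq> carrier_vec (m - 1) \<and>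
     (\<forall>\<theta>\<in>\<Theta>. real_orthogonal m (Q \<theta>)) \<and>
     (\<forall>h \<in> carrier_vec m. h \<noteq> 0\<^sub>v m \<longrightarrow>
        (\<exists>!\<theta>. \<theta> \<in> \<Theta> \<and> transpose_mat (Q \<theta>) *\<^sub>v h = vnorm h \<cdot>\<^sub>v unit_vec m (k - 1)))"

definition upper_hessenberg :: "real mat \<Rightarrow> bool" where
  "upper_hessenberg A \<longleftrightarrow> (\<forall>i < dim_row A. \<forall>j < dim_col A. j + 1 < i \<longrightarrow> A $$ (i, j) = 0)"

definition HOON :: "nat \<Rightarrow> nat \<Rightarrow> real mat \<Rightarrow> real mat \<Rightarrow> bool" where
  "HOON n d A C \<longleftrightarrow> A \<in> carrier_mat n n \<and> C \<in> carrier_mat d n \<and>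
     upper_hessenberg A \<and>
     (\<forall>j. 0 < j \<and> j < n \<longrightarrow> C $$ (0, j) = 0) \<and>
     transpose_mat A * A = 1\<^sub>m n - transpose_mat C * C"

definition strict_HOON :: "nat \<Rightarrow> nat \<Rightarrow> real mat \<Rightarrow> real mat \<Rightarrow> bool" where
  "strict_HOON n d A C \<longleftrightarrow> HOON n d A C \<and>
     (\<forall>i. i + 1 < n \<longrightarrow> A $$ (i + 1, i) > 0) \<and>
     0 < C $$ (0, 0) \<and> C $$ (0, 0) < 1"

definition blkO :: "nat \<Rightarrow> real mat \<Rightarrow> real mat" where
  "blkO d V = mat d d (\<lambda>(i, j). V $$ (i, j))"
definition blkx :: "nat \<Rightarrow> real mat \<Rightarrow> real vec" where
  "blkx d V = vec d (\<lambda>i. V $$ (i, d))"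
definition blky :: "nat \<Rightarrow> real mat \<Rightarrow> real vec" where
  "blky d V = vec d (\<lambda>j. V $$ (d, j))"
definition blkmu :: "nat \<Rightarrow> real mat \<Rightarrow> real" where
  "blkmu d V = V $$ (d, d)"

definition Vk :: "nat \<Rightarrow> nat \<Rightarrow> nat \<Rightarrow> real mat \<Rightarrow> real mat" where
  "Vk n d k W = mat (n + d - 1) (n + d - 1) (\<lambda>(i, j).
      let p = d + k - 1 in
      if i < d \<and> j < d then blkO d W $$ (i, j)
      else if i < d \<and> j = p then blkx d W $ i
      else if i = p \<and> j < d then blky d W $ j
      else if i = p \<and> j = p then blkmu d W
      else if i = j then 1 else 0)"

definition Vn :: "nat \<Rightarrow> nat \<Rightarrow> real mat \<Rightarrow> real mat" where
  "Vn n d W = mat (n + d - 1) (n + d - 1) (\<lambda>(i, j).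
      if i < d \<and> j < d then W $$ (i, j) else if i = j then 1 else 0)"

definition Pmat :: "nat \<Rightarrow> real \<Rightarrow> real mat" where
  "Pmat n \<gamma> = mat n n (\<lambda>(i, j).
      if i = 1 \<and> j = 0 then \<gamma>
      else if 2 \<le> i \<and> i < n \<and> j = i - 1 then 1
      else if i = 0 \<and> j = n - 1 then 1 else 0)"

(* V^(1)(theta_1) ... V^(n-1)(theta_{n-1}) V^(n)(phi) (0_{d-1,n} ; P(gamma));
   ths ! (k-1) = theta_k *)
definition stacked :: "nat \<Rightarrow> nat \<Rightarrow> (real vec \<Rightarrow> real mat) \<Rightarrow> (real vec \<Rightarrow> real mat)
    \<Rightarrow> real \<Rightarrow> real vec list \<Rightarrow> real vec \<Rightarrow> real mat" where
  "stacked n d Vt Vd \<gamma> ths \<phi> =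
     foldr (\<lambda>k M. Vk n d k (Vt (ths ! (k - 1))) * M) [1..<n] (Vn n d (Vd \<phi>))
     * (0\<^sub>m (d - 1) n @\<^sub>r Pmat n \<gamma>)"

definition assign :: "nat \<Rightarrow> nat \<Rightarrow> (real vec \<Rightarrow> real mat) \<Rightarrow> (real vec \<Rightarrow> real mat)
    \<Rightarrow> real \<times> real vec list \<times> real vec \<Rightarrow> real mat \<times> real mat" where
  "assign n d Vt Vd t = (case t of (\<gamma>, ths, \<phi>) \<Rightarrow>
     let S = stacked n d Vt Vd \<gamma> ths \<phi> in
     (mat n n (\<lambda>(i, j). S $$ (d - 1 + i, j)),
      mat d n (\<lambda>(i, j). if i = 0 then (if j = 0 then sqrt (1 - \<gamma>\<^sup>2) else 0)
                        else S $$ (i - 1, j))))"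

end

theory Submission
  imports Defs "Jordan_Normal_Form.Determinant"
begin

text \<open>
  Stack the rows 2..d of C on top of A into an (n+d-1) x n matrix X. The pair (A, C) is a
  strict HOON pair exactly when X has the Hessenberg shape of A (zero below row d+j in column j,
  positive at row d+j) and orthogonal columns of norms \<open>\<gamma>, 1, ..., 1\<close>, where
  \<open>\<gamma>\<^sup>2 = 1 - C\<^sub>1\<^sub>1\<^sup>2\<close>. The matrix (0; P(\<gamma>)) is the simplest such column system, and
  each V^(k) is an orthogonal matrix acting only on rows 1..d and d+k, so the products in the
  statement have this shape. Conversely, the k-th column of such an X is supported on exactly
  these d+1 rows once the previous columns agree with (0; P(\<gamma>)); the ORP property produces a
  unique parameter reducing it to a multiple of the unit vector at row d+k, with \<open>\<mu> > 0\<close>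
  forced by the positive subdiagonal entry. Peeling off the columns one at a time recovers the
  parameters, and their uniqueness gives injectivity.
\<close>

lemma index_mult_mat_sum:
  assumes "A \<in> carrier_mat a b" "B \<in> carrier_mat b c" "i < a" "j < c"
  shows "(A * B) $$ (i, j) = (\<Sum>l<b. A $$ (i, l) * B $$ (l, j))"
  using assms by (auto simp: scalar_prod_def atLeast0LessThan intro!: sum.cong)

lemma index_gram_mat_sum:
  assumes "X \<in> carrier_mat a b" "i < b" "j < b"
  shows "(transpose_mat X * X) $$ (i, j) = (\<Sum>l<a. X $$ (l, i) * X $$ (l, j))"
  using assms by (auto simp: scalar_prod_def atLeast0LessThan intro!: sum.cong)

lemma sum_lessThan_add:
  fixes f :: "nat \<Rightarrow> 'a :: comm_monoid_add"
  shows "(\<Sum>l<a + b. f l) = (\<Sum>l<a. f l) + (\<Sum>l<b. f (a + l))"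
  by (induction b) (simp_all add: ac_simps)

lemma index_append_rows:
  assumes "A \<in> carrier_mat nr1 nc" "B \<in> carrier_mat nr2 nc" "i < nr1 + nr2" "j < nc"
  shows "(A @\<^sub>r B) $$ (i, j) = (if i < nr1 then A $$ (i, j) else B $$ (i - nr1, j))"
  using assms by (simp add: append_rows_def)

subsection \<open>Real orthogonal matrices\<close>

lemma real_orthogonal_mult_transpose:
  "real_orthogonal m Q \<Longrightarrow> Q * transpose_mat Q = 1\<^sub>m m"
  unfolding real_orthogonal_def
  by (intro mat_mult_left_right_inverse[of "transpose_mat Q"]) auto

lemma real_orthogonal_transpose:
  "real_orthogonal m Q \<Longrightarrow> real_orthogonal m (transpose_mat Q)"
  using real_orthogonal_mult_transpose by (auto simp: real_orthogonal_def)

lemma real_orthogonal_gram_mult: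
  assumes G: "real_orthogonal N G" and Y: "Y \<in> carrier_mat N c"
  shows "transpose_mat (G * Y) * (G * Y) = transpose_mat Y * Y"
proof -
  have Gc: "G \<in> carrier_mat N N" and o: "transpose_mat G * G = 1\<^sub>m N"
    using G by (auto simp: real_orthogonal_def)
  have "transpose_mat (G * Y) * (G * Y) = transpose_mat Y * ((transpose_mat G * G) * Y)"
    using Gc Y by (simp add: transpose_mult assoc_mult_mat[of _ c N _ N _ c])
  then show ?thesis using o Y by simp
qed

lemma real_orthogonal_mult_cancel_left:
  assumes G: "real_orthogonal N G" and Y: "Y \<in> carrier_mat N c" and Y': "Y' \<in> carrier_mat N c"
    and eq: "G * Y = G * Y'"
  shows "Y = Y'"
proof -
  have Gc: "G \<in> carrier_mat N N" and o: "transpose_mat G * G = 1\<^sub>m N"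
    using G by (auto simp: real_orthogonal_def)
  have "Y = transpose_mat G * (G * Y)"
    using Gc Y o by (simp add: assoc_mult_mat[symmetric, of _ N N _ N _ c])
  also have "\<dots> = Y'"
    unfolding eq using Gc Y' o by (simp add: assoc_mult_mat[symmetric, of _ N N _ N _ c])
  finally show ?thesis .
qed

lemma real_orthogonal_mult_transpose_mult:
  assumes G: "real_orthogonal N G" and X: "X \<in> carrier_mat N c"
  shows "G * (transpose_mat G * X) = X"
  using real_orthogonal_mult_transpose[OF G] G X
  by (simp add: real_orthogonal_def assoc_mult_mat[symmetric, of _ N N _ N _ c])

subsection \<open>Orthogonal reduction parameterizations\<close>

lemma mult_mat_vec_unit_vec:
  "(Q :: 'a :: semiring_1 mat) \<in> carrier_mat n m \<Longrightarrow> i < m \<Longrightarrow> Q *\<^sub>v unit_vec m i = col Q i"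
  by (intro eq_vecI) auto

lemma ORP_orthogonal: "ORP m k Q S \<Longrightarrow> \<theta> \<in> S \<Longrightarrow> real_orthogonal m (Q \<theta>)"
  by (simp add: ORP_def)

lemma ORP_reduces:
  assumes orp: "ORP m k Q S" and k: "1 \<le> k" "k \<le> m" and h: "h \<in> carrier_vec m" "h \<noteq> 0\<^sub>v m"
  obtains \<theta> where "\<theta> \<in> S" "transpose_mat (Q \<theta>) *\<^sub>v h = vnorm h \<cdot>\<^sub>v unit_vec m (k - 1)"
    "h = vnorm h \<cdot>\<^sub>v col (Q \<theta>) (k - 1)"
proof -
  obtain \<theta> where th: "\<theta> \<in> S" and eq: "transpose_mat (Q \<theta>) *\<^sub>v h = vnorm h \<cdot>\<^sub>v unit_vec m (k - 1)"
    using orp h unfolding ORP_def by blast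
  have Q: "real_orthogonal m (Q \<theta>)" by (rule ORP_orthogonal[OF orp th])
  have "h = (Q \<theta> * transpose_mat (Q \<theta>)) *\<^sub>v h"
    using real_orthogonal_mult_transpose[OF Q] h by simp
  also have "\<dots> = vnorm h \<cdot>\<^sub>v col (Q \<theta>) (k - 1)"
    using Q h eq k by (auto simp: real_orthogonal_def mult_mat_vec mult_mat_vec_unit_vec)
  finally show ?thesis using that th eq by blast
qed

lemma real_orthogonal_col:
  assumes Q: "real_orthogonal m Q" and i: "i < m"
  shows "transpose_mat Q *\<^sub>v col Q i = unit_vec m i" "vnorm (col Q i) = 1"
proof -
  have Qc: "Q \<in> carrier_mat m m" and o: "transpose_mat Q * Q = 1\<^sub>m m"
    using Q by (auto simp: real_orthogonal_def)
  have "transpose_mat Q *\<^sub>v col Q i = col (transpose_mat Q * Q) i"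
    using col_mult2[of "transpose_mat Q" m m Q m i] Qc i by simp
  then show "transpose_mat Q *\<^sub>v col Q i = unit_vec m i"
    using o i by simp
  have "col Q i \<bullet> col Q i = (transpose_mat Q * Q) $$ (i, i)"
    using Qc i by simp
  then show "vnorm (col Q i) = 1"
    using o i by (simp add: vnorm_def)
qed

lemma ORP_unique_by_col:
  assumes orp: "ORP m k Q S" and k: "1 \<le> k" "k \<le> m" and th: "\<theta> \<in> S" "\<theta>' \<in> S"
    and eq: "col (Q \<theta>) (k - 1) = col (Q \<theta>') (k - 1)"
  shows "\<theta> = \<theta>'"
proof -
  define h where "h = col (Q \<theta>) (k - 1)"
  have Q: "real_orthogonal m (Q \<theta>)" "real_orthogonal m (Q \<theta>')"
    using orp th by (auto simp: ORP_orthogonal)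
  have km: "k - 1 < m" using k by simp
  have h1: "vnorm h = 1"
    unfolding h_def using real_orthogonal_col(2)[OF Q(1) km] .
  have "h \<in> carrier_vec m"
    using Q(1) by (auto simp: h_def real_orthogonal_def)
  moreover have "h \<noteq> 0\<^sub>v m"
    using h1 by (auto simp: vnorm_def)
  ultimately have "\<exists>!\<theta>. \<theta> \<in> S \<and> transpose_mat (Q \<theta>) *\<^sub>v h = vnorm h \<cdot>\<^sub>v unit_vec m (k - 1)"
    using orp unfolding ORP_def by blast
  moreover have "transpose_mat (Q \<theta>) *\<^sub>v h = vnorm h \<cdot>\<^sub>v unit_vec m (k - 1)"
    "transpose_mat (Q \<theta>') *\<^sub>v h = vnorm h \<cdot>\<^sub>v unit_vec m (k - 1)"
    using real_orthogonal_col(1)[OF Q(1) km] real_orthogonal_col(1)[OF Q(2) km] eq h1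
    by (auto simp: h_def)
  ultimately show ?thesis using th by blast
qed

subsection \<open>Matrices acting on a subset of the coordinates\<close>

definition embed_mat :: "nat \<Rightarrow> nat set \<Rightarrow> (nat \<Rightarrow> nat) \<Rightarrow> 'a :: zero_neq_one mat \<Rightarrow> 'a mat" where
  "embed_mat N E \<tau> W = mat N N (\<lambda>(i, j). if i \<in> E \<and> j \<in> E then W $$ (\<tau> i, \<tau> j)
      else if i = j then 1 else 0)"

locale index_embedding =
  fixes N m :: nat and E :: "nat set" and \<tau> \<sigma> :: "nat \<Rightarrow> nat"
  assumes subset: "E \<subseteq> {..<N}"
    and \<tau>_less: "\<And>r. r \<in> E \<Longrightarrow> \<tau> r < m"
    and \<sigma>_mem: "\<And>i. i < m \<Longrightarrow> \<sigma> i \<in> E"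
    and \<sigma>_\<tau>: "\<And>r. r \<in> E \<Longrightarrow> \<sigma> (\<tau> r) = r"
    and \<tau>_\<sigma>: "\<And>i. i < m \<Longrightarrow> \<tau> (\<sigma> i) = i"
begin

abbreviation emb :: "'a :: zero_neq_one mat \<Rightarrow> 'a mat" where
  "emb \<equiv> embed_mat N E \<tau>"

lemma embed_carrier[simp]: "emb W \<in> carrier_mat N N"
  by (simp add: embed_mat_def)

lemma mem_less: "r \<in> E \<Longrightarrow> r < N"
  using subset by auto

lemma finite_E: "finite E"
  using subset finite_subset by blast

lemma sum_reindex: "(\<Sum>l\<in>E. g l) = (\<Sum>i<m. g (\<sigma> i))"
proof -
  have "bij_betw \<sigma> {..<m} E"
    by (rule bij_betw_byWitness[where f'=\<tau>]) (auto simp: \<sigma>_\<tau> \<tau>_\<sigma> \<sigma>_mem \<tau>_less)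
  then show ?thesis by (simp add: sum.reindex_bij_betw)
qed

lemma index_embed_mult:
  fixes W X :: "'a :: comm_ring_1 mat"
  assumes X: "X \<in> carrier_mat N c" and i: "i < N" and j: "j < c"
  shows "(emb W * X) $$ (i, j) =
     (if i \<in> E then (\<Sum>l\<in>E. W $$ (\<tau> i, \<tau> l) * X $$ (l, j)) else X $$ (i, j))"
proof -
  have "(emb W * X) $$ (i, j) = (\<Sum>l<N. emb W $$ (i, l) * X $$ (l, j))"
    by (rule index_mult_mat_sum[OF embed_carrier X i j])
  also have "\<dots> = (if i \<in> E then (\<Sum>l\<in>E. W $$ (\<tau> i, \<tau> l) * X $$ (l, j)) else X $$ (i, j))"
  proof (cases "i \<in> E")
    case True
    have "(\<Sum>l<N. emb W $$ (i, l) * X $$ (l, j)) = (\<Sum>l\<in>E. emb W $$ (i, l) * X $$ (l, j))"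
      by (rule sum.mono_neutral_right) (use subset True in \<open>auto simp: embed_mat_def mem_less\<close>)
    also have "\<dots> = (\<Sum>l\<in>E. W $$ (\<tau> i, \<tau> l) * X $$ (l, j))"
      by (rule sum.cong) (use True in \<open>auto simp: embed_mat_def mem_less\<close>)
    finally show ?thesis using True by simp
  next
    case False
    have "(\<Sum>l<N. emb W $$ (i, l) * X $$ (l, j)) = (\<Sum>l<N. if l = i then X $$ (l, j) else 0)"
      by (rule sum.cong) (use False i in \<open>auto simp: embed_mat_def\<close>)
    then show ?thesis using False i by simp
  qed
  finally show ?thesis .
qed

lemma embed_transpose:
  "W \<in> carrier_mat m m \<Longrightarrow> transpose_mat (emb W) = emb (transpose_mat W)"
  using \<tau>_less by (intro eq_matI) (auto simp: embed_mat_def)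

lemma embed_mult:
  fixes W1 W2 :: "'a :: comm_ring_1 mat"
  assumes W1: "W1 \<in> carrier_mat m m" and W2: "W2 \<in> carrier_mat m m"
  shows "emb W1 * emb W2 = emb (W1 * W2)"
proof (rule eq_matI)
  fix i j assume "i < dim_row (emb (W1 * W2))" "j < dim_col (emb (W1 * W2))"
  then have i: "i < N" and j: "j < N" by (auto simp: embed_mat_def)
  have "(\<Sum>l\<in>E. W1 $$ (\<tau> i, \<tau> l) * emb W2 $$ (l, j)) = (W1 * W2) $$ (\<tau> i, \<tau> j)"
    if "i \<in> E" "j \<in> E"
  proof -
    have "(\<Sum>l\<in>E. W1 $$ (\<tau> i, \<tau> l) * emb W2 $$ (l, j))
        = (\<Sum>l\<in>E. W1 $$ (\<tau> i, \<tau> l) * W2 $$ (\<tau> l, \<tau> j))"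
      by (rule sum.cong) (use that in \<open>auto simp: embed_mat_def mem_less\<close>)
    also have "\<dots> = (\<Sum>k<m. W1 $$ (\<tau> i, k) * W2 $$ (k, \<tau> j))"
      by (simp add: sum_reindex \<tau>_\<sigma>)
    also have "\<dots> = (W1 * W2) $$ (\<tau> i, \<tau> j)"
      by (rule index_mult_mat_sum[symmetric, OF W1 W2]) (use that \<tau>_less in auto)
    finally show ?thesis .
  qed
  moreover have "(\<Sum>l\<in>E. W1 $$ (\<tau> i, \<tau> l) * emb W2 $$ (l, j)) = 0" if "j \<notin> E"
    by (rule sum.neutral) (use that j in \<open>auto simp: embed_mat_def mem_less\<close>)
  ultimately show "(emb W1 * emb W2) $$ (i, j) = emb (W1 * W2) $$ (i, j)"
    using i j by (simp add: index_embed_mult[OF embed_carrier i j]) (auto simp: embed_mat_def)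
qed (auto simp: embed_mat_def)

lemma embed_one: "emb (1\<^sub>m m) = 1\<^sub>m N"
  using subset \<tau>_less \<sigma>_\<tau> by (intro eq_matI) (auto simp: embed_mat_def, metis)

lemma real_orthogonal_embed:
  assumes W: "real_orthogonal m W"
  shows "real_orthogonal N (emb W)"
  using W by (simp add: real_orthogonal_def embed_transpose embed_mult embed_one)

lemma embed_mult_unit_col:
  fixes W X :: "'a :: comm_ring_1 mat"
  assumes X: "X \<in> carrier_mat N c" and j: "j < c" and r: "r < N"
    and col: "\<And>l. l < N \<Longrightarrow> X $$ (l, j) = (if l = q then a else 0)"
  shows "(emb W * X) $$ (r, j) =
     (if r \<in> E then (if q \<in> E then W $$ (\<tau> r, \<tau> q) * a else 0) else (if r = q then a else 0))"
proof -
  have "(\<Sum>l\<in>E. W $$ (\<tau> r, \<tau> l) * X $$ (l, j)) = (\<Sum>l\<in>E. if l = q then W $$ (\<tau> r, \<tau> q) * a else 0)"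
    by (rule sum.cong) (auto simp: col mem_less)
  also have "\<dots> = (if q \<in> E then W $$ (\<tau> r, \<tau> q) * a else 0)"
    using finite_E by (simp add: sum.delta)
  finally show ?thesis using index_embed_mult[OF X r j] col r by simp
qed

lemma ORP_embedded_reduction:
  fixes X :: "real mat"
  assumes orp: "ORP m k Q S" and k: "1 \<le> k" "k \<le> m"
    and X: "X \<in> carrier_mat N c" and j: "j < c"
    and supp: "\<And>r. r < N \<Longrightarrow> r \<notin> E \<Longrightarrow> X $$ (r, j) = 0"
    and norm: "(\<Sum>l\<in>E. X $$ (l, j) * X $$ (l, j)) = a * a" and a: "0 < a"
  obtains \<theta> where "\<theta> \<in> S"
    "\<And>r. r \<in> E \<Longrightarrow> X $$ (r, j) = a * Q \<theta> $$ (\<tau> r, k - 1)"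
    "\<And>r. r < N \<Longrightarrow> (emb (transpose_mat (Q \<theta>)) * X) $$ (r, j) = (if r = \<sigma> (k - 1) then a else 0)"
proof -
  define h where "h = vec m (\<lambda>i. X $$ (\<sigma> i, j))"
  have hc: "h \<in> carrier_vec m" by (simp add: h_def)
  have "h \<bullet> h = a * a"
    using norm by (simp add: h_def scalar_prod_def sum_reindex atLeast0LessThan)
  then have hn: "vnorm h = a" using a by (simp add: vnorm_def)
  then have "h \<noteq> 0\<^sub>v m" using a by (auto simp: vnorm_def)
  then obtain \<theta> where th: "\<theta> \<in> S"
    and red: "transpose_mat (Q \<theta>) *\<^sub>v h = a \<cdot>\<^sub>v unit_vec m (k - 1)"
    and hcol: "h = a \<cdot>\<^sub>v col (Q \<theta>) (k - 1)"
    using ORP_reduces[OF orp k hc] hn by metis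
  have Qc: "Q \<theta> \<in> carrier_mat m m"
    using ORP_orthogonal[OF orp th] by (simp add: real_orthogonal_def)
  have h_E: "X $$ (r, j) = h $ \<tau> r" if "r \<in> E" for r
    using that by (simp add: h_def \<tau>_less \<sigma>_\<tau>)
  show thesis
  proof (rule that[OF th])
    fix r assume r: "r \<in> E"
    show "X $$ (r, j) = a * Q \<theta> $$ (\<tau> r, k - 1)"
      using arg_cong[OF hcol, of "\<lambda>v. v $ \<tau> r"] h_E[OF r] Qc \<tau>_less[OF r] k by simp
  next
    fix r assume r: "r < N"
    show "(emb (transpose_mat (Q \<theta>)) * X) $$ (r, j) = (if r = \<sigma> (k - 1) then a else 0)"
    proof (cases "r \<in> E")
      case True
      have "(\<Sum>l\<in>E. transpose_mat (Q \<theta>) $$ (\<tau> r, \<tau> l) * X $$ (l, j))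
          = (\<Sum>i<m. Q \<theta> $$ (i, \<tau> r) * h $ i)"
        using Qc True by (simp add: sum_reindex \<tau>_\<sigma> \<tau>_less \<sigma>_mem h_E)
      also have "\<dots> = (transpose_mat (Q \<theta>) *\<^sub>v h) $ \<tau> r"
        using Qc hc True \<tau>_less by (simp add: scalar_prod_def atLeast0LessThan)
      also have "\<dots> = (if r = \<sigma> (k - 1) then a else 0)"
        using red True \<tau>_less[OF True] \<sigma>_\<tau>[OF True] \<tau>_\<sigma> k by auto
      finally show ?thesis using index_embed_mult[OF X r j] True by simp
    next
      case False
      then have "r \<noteq> \<sigma> (k - 1)" using \<sigma>_mem k by auto
      then show ?thesis using index_embed_mult[OF X r j] False supp[OF r False] by simp
    qed
  qed
qed

lemma ORP_embedded_unique:
  fixes Y Y' :: "real mat"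
  assumes orp: "ORP m k Q S" and k: "1 \<le> k" "k \<le> m" and th: "\<theta> \<in> S" "\<theta>' \<in> S"
    and Y: "Y \<in> carrier_mat N c" and Y': "Y' \<in> carrier_mat N c" and j: "j < c" and a: "a \<noteq> 0"
    and col: "\<And>r. r < N \<Longrightarrow> Y $$ (r, j) = (if r = \<sigma> (k - 1) then a else 0)"
    and col': "\<And>r. r < N \<Longrightarrow> Y' $$ (r, j) = (if r = \<sigma> (k - 1) then a else 0)"
    and eq: "emb (Q \<theta>) * Y = emb (Q \<theta>') * Y'"
  shows "\<theta> = \<theta>' \<and> Y = Y'"
proof -
  have q: "\<sigma> (k - 1) \<in> E" "\<tau> (\<sigma> (k - 1)) = k - 1" using k \<sigma>_mem \<tau>_\<sigma> by auto
  have entry: "(emb (Q \<psi>) * Z) $$ (\<sigma> i, j) = Q \<psi> $$ (i, k - 1) * a"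
    if "i < m" and Z: "Z \<in> carrier_mat N c"
      "\<And>r. r < N \<Longrightarrow> Z $$ (r, j) = (if r = \<sigma> (k - 1) then a else 0)" for i \<psi> Z
    using embed_mult_unit_col[OF Z(1) j mem_less[OF \<sigma>_mem[OF that(1)]] Z(2)] q that(1)
    by (simp add: \<sigma>_mem \<tau>_\<sigma>)
  have "col (Q \<theta>) (k - 1) = col (Q \<theta>') (k - 1)"
  proof (rule eq_vecI)
    fix i assume "i < dim_vec (col (Q \<theta>') (k - 1))"
    then have i: "i < m"
      using ORP_orthogonal[OF orp th(2)] by (auto simp: real_orthogonal_def)
    have "Q \<theta> $$ (i, k - 1) * a = Q \<theta>' $$ (i, k - 1) * a"
      using entry[OF i Y col, of \<theta>] entry[OF i Y' col', of \<theta>'] eq by metis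
    then show "col (Q \<theta>) (k - 1) $ i = col (Q \<theta>') (k - 1) $ i"
      using a i ORP_orthogonal[OF orp th(1)] ORP_orthogonal[OF orp th(2)] k
      by (auto simp: real_orthogonal_def)
  qed (use ORP_orthogonal[OF orp th(1)] ORP_orthogonal[OF orp th(2)] in \<open>auto simp: real_orthogonal_def\<close>)
  then have "\<theta> = \<theta>'" by (rule ORP_unique_by_col[OF orp k th])
  moreover have "Y = Y'"
    using real_orthogonal_mult_cancel_left[OF real_orthogonal_embed[OF ORP_orthogonal[OF orp th(1)]] Y Y']
      eq \<open>\<theta> = \<theta>'\<close> by simp
  ultimately show ?thesis by simp
qed

end

subsection \<open>The parameterization of strict HOON pairs\<close>

locale hoon_parameterization =
  fixes n d :: nat
    and Vt :: "real vec \<Rightarrow> real mat" and \<Theta> :: "real vec set"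
    and Vd :: "real vec \<Rightarrow> real mat" and \<Phi> :: "real vec set"
  assumes n2: "2 \<le> n" and d1: "1 \<le> d"
    and orp_t: "ORP (d + 1) (d + 1) Vt \<Theta>"
    and orp_d: "ORP d d Vd \<Phi>"
begin

abbreviation N :: nat where "N \<equiv> n + d - 1"

(* V^(k) acts on the rows block_rows k of the stacked matrix; block_index and block_row k
   identify them with the rows 0..d of the (d+1) x (d+1) matrix it embeds. *)
definition block_rows :: "nat \<Rightarrow> nat set" where
  "block_rows k = {r. r < d \<or> r = d + k - 1}"

definition block_index :: "nat \<Rightarrow> nat" where
  "block_index r = (if r < d then r else d)"

definition block_row :: "nat \<Rightarrow> nat \<Rightarrow> nat" where
  "block_row k i = (if i < d then i else d + k - 1)"

lemma index_embedding_block: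
  "1 \<le> k \<Longrightarrow> k < n \<Longrightarrow> index_embedding N (d + 1) (block_rows k) block_index (block_row k)"
  by unfold_locales (auto simp: block_rows_def block_index_def block_row_def)

lemma index_embedding_top: "index_embedding N d {..<d} id id"
  using n2 by unfold_locales auto

lemma Vk_eq_embed:
  "1 \<le> k \<Longrightarrow> k < n \<Longrightarrow> Vk n d k W = embed_mat N (block_rows k) block_index W"
  unfolding Vk_def embed_mat_def block_rows_def block_index_def
  by (intro eq_matI) (auto simp: blkO_def blkx_def blky_def blkmu_def Let_def)

lemma Vn_eq_embed: "Vn n d W = embed_mat N {..<d} id W"
  unfolding Vn_def embed_mat_def by (intro eq_matI) auto

definition Z :: "real \<Rightarrow> real mat" where
  "Z \<gamma> = 0\<^sub>m (d - 1) n @\<^sub>r Pmat n \<gamma>"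

definition Z_row :: "nat \<Rightarrow> nat" where
  "Z_row j = (if j = n - 1 then d - 1 else d + j)"

definition Z_val :: "real \<Rightarrow> nat \<Rightarrow> real" where
  "Z_val \<gamma> j = (if j = 0 then \<gamma> else 1)"

lemma Z_carrier[simp]: "Z \<gamma> \<in> carrier_mat N n"
proof -
  have "Pmat n \<gamma> \<in> carrier_mat n n" by (simp add: Pmat_def)
  then have "Z \<gamma> \<in> carrier_mat (d - 1 + n) n" unfolding Z_def by auto
  moreover have "d - 1 + n = N" using d1 by simp
  ultimately show ?thesis by simp
qed

lemma Z_row_less: "j < n \<Longrightarrow> Z_row j < N"
  using d1 n2 by (auto simp: Z_row_def)

lemma Z_row_inj: "i < n \<Longrightarrow> j < n \<Longrightarrow> Z_row i = Z_row j \<Longrightarrow> i = j"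
  using d1 by (auto simp: Z_row_def split: if_splits)

lemma Z_val_pos: "0 < \<gamma> \<Longrightarrow> 0 < Z_val \<gamma> j"
  by (simp add: Z_val_def)

lemma index_Z:
  assumes r: "r < N" and j: "j < n"
  shows "Z \<gamma> $$ (r, j) = (if r = Z_row j then Z_val \<gamma> j else 0)"
proof -
  have Zr: "Z \<gamma> $$ (r, j) = (if r < d - 1 then 0 else Pmat n \<gamma> $$ (r - (d - 1), j))"
  proof -
    have "Pmat n \<gamma> \<in> carrier_mat n n" by (simp add: Pmat_def)
    moreover have "r < d - 1 + n" using r d1 by simp
    ultimately show ?thesis
      unfolding Z_def using j by (simp add: index_append_rows[of _ "d - 1" n])
  qed
  have Pr: "Pmat n \<gamma> $$ (r - (d - 1), j) = (if r = Z_row j then Z_val \<gamma> j else 0)"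
    if "\<not> r < d - 1"
  proof -
    define i where "i = r - (d - 1)"
    have i: "i < n" and ri: "r = i + (d - 1)" using r that d1 by (auto simp: i_def)
    have P: "Pmat n \<gamma> $$ (i, j) = (if i = 1 \<and> j = 0 then \<gamma> else if 2 \<le> i \<and> j = i - 1 then 1
        else if i = 0 \<and> j = n - 1 then 1 else 0)"
      using i j by (simp add: Pmat_def)
    have "Pmat n \<gamma> $$ (i, j) = (if i + (d - 1) = Z_row j then Z_val \<gamma> j else 0)"
    proof (cases "j = n - 1")
      case True
      then have "j \<noteq> 0" using n2 by simp
      then show ?thesis unfolding P Z_row_def Z_val_def using True d1 i by auto
    next
      case False
      then show ?thesis unfolding P Z_row_def Z_val_def using d1 i j by auto
    qed
    then show ?thesis using ri by simp
  qed
  have "d - 1 \<le> Z_row j" by (auto simp: Z_row_def)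
  then show ?thesis
    unfolding Zr using Pr by (cases "r < d - 1") auto
qed

lemma gram_Z:
  assumes i: "i < n" and j: "j < n"
  shows "(transpose_mat (Z \<gamma>) * Z \<gamma>) $$ (i, j) = (if i = j then (Z_val \<gamma> i)\<^sup>2 else 0)"
proof -
  have "(transpose_mat (Z \<gamma>) * Z \<gamma>) $$ (i, j) = (\<Sum>l<N. Z \<gamma> $$ (l, i) * Z \<gamma> $$ (l, j))"
    by (rule index_gram_mat_sum[OF Z_carrier i j])
  also have "\<dots> = (\<Sum>l<N. if l = Z_row i then (if i = j then (Z_val \<gamma> i)\<^sup>2 else 0) else 0)"
    using i j Z_row_inj by (intro sum.cong) (auto simp: index_Z power2_eq_square)
  finally show ?thesis using Z_row_less[OF i] by simp
qed

(* tail_prod m th \<phi> = V^(m) ... V^(n-1) V^(n); the parameter th k plays the role of \<theta>_(k+1). *)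
definition tail_prod :: "nat \<Rightarrow> (nat \<Rightarrow> real vec) \<Rightarrow> real vec \<Rightarrow> real mat" where
  "tail_prod m th \<phi> = foldr (\<lambda>k M. Vk n d k (Vt (th (k - 1))) * M) [m..<n] (Vn n d (Vd \<phi>))"

lemma Vk_carrier: "Vk n d k W \<in> carrier_mat N N"
  unfolding Vk_def by (rule mat_carrier)

lemma tail_prod_carrier[simp]: "tail_prod m th \<phi> \<in> carrier_mat N N"
proof -
  have "foldr (\<lambda>k M. Vk n d k (Vt (th (k - 1))) * M) ks (Vn n d (Vd \<phi>)) \<in> carrier_mat N N" for ks
    by (induction ks) (auto simp: Vk_def Vn_def)
  then show ?thesis unfolding tail_prod_def .
qed

lemma tail_prod_Z_last: "tail_prod n th \<phi> * Z \<gamma> = embed_mat N {..<d} id (Vd \<phi>) * Z \<gamma>"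
  by (simp add: tail_prod_def Vn_eq_embed)

lemma tail_prod_Z_step:
  assumes m: "1 \<le> m" "m < n"
  shows "tail_prod m th \<phi> * Z \<gamma> =
    embed_mat N (block_rows m) block_index (Vt (th (m - 1))) * (tail_prod (Suc m) th \<phi> * Z \<gamma>)"
proof -
  have "tail_prod m th \<phi> * Z \<gamma> = (Vk n d m (Vt (th (m - 1))) * tail_prod (Suc m) th \<phi>) * Z \<gamma>"
    using m by (simp add: tail_prod_def upt_rec)
  also have "\<dots> = Vk n d m (Vt (th (m - 1))) * (tail_prod (Suc m) th \<phi> * Z \<gamma>)"
    by (rule assoc_mult_mat[OF Vk_carrier tail_prod_carrier Z_carrier])
  finally show ?thesis using m by (simp add: Vk_eq_embed)
qed

lemma tail_prod_cong:
  "(\<And>k. m \<le> k + 1 \<Longrightarrow> k + 1 < n \<Longrightarrow> th k = th' k) \<Longrightarrow> tail_prod m th \<phi> = tail_prod m th' \<phi>"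
proof -
  assume th: "\<And>k. m \<le> k + 1 \<Longrightarrow> k + 1 < n \<Longrightarrow> th k = th' k"
  have "th (k - 1) = th' (k - 1)" if "k \<in> set [m..<n]" for k
    by (rule th) (use that n2 in auto)
  then show ?thesis unfolding tail_prod_def by (intro foldr_cong) auto
qed

definition admissible :: "nat \<Rightarrow> (nat \<Rightarrow> real vec) \<Rightarrow> real vec \<Rightarrow> bool" where
  "admissible m th \<phi> \<longleftrightarrow>
     (\<forall>k. m \<le> k + 1 \<longrightarrow> k + 1 < n \<longrightarrow> th k \<in> \<Theta> \<and> 0 < blkmu d (Vt (th k))) \<and> \<phi> \<in> \<Phi>"

(* The shape of tail_prod m th \<phi> * Z \<gamma>: its first m-1 columns are those of Z \<gamma>, the others
   have the Hessenberg shape of a stacked strict HOON pair. For m = 1 it characterizes such pairs. *)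
definition reduced_form :: "real \<Rightarrow> nat \<Rightarrow> real mat \<Rightarrow> bool" where
  "reduced_form \<gamma> m X \<longleftrightarrow> X \<in> carrier_mat N n \<and> transpose_mat X * X = transpose_mat (Z \<gamma>) * Z \<gamma> \<and>
     (\<forall>j r. j + 1 < m \<longrightarrow> r < N \<longrightarrow> X $$ (r, j) = Z \<gamma> $$ (r, j)) \<and>
     (\<forall>j r. m \<le> j + 1 \<longrightarrow> j < n \<longrightarrow> d + j < r \<longrightarrow> r < N \<longrightarrow> X $$ (r, j) = 0) \<and>
     (\<forall>j. m \<le> j + 1 \<longrightarrow> j + 1 < n \<longrightarrow> 0 < X $$ (d + j, j))"

lemma reduced_form_Z_col:
  assumes "reduced_form \<gamma> m X" "j + 1 < m" "j < n" "r < N"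
  shows "X $$ (r, j) = (if r = Z_row j then Z_val \<gamma> j else 0)"
  using assms by (simp add: reduced_form_def index_Z)

lemma reduced_form_orthogonal_row:
  assumes X: "reduced_form \<gamma> m X" and \<gamma>: "0 < \<gamma>" and j: "j + 1 < m" "j < n"
    and i: "i < n" "i \<noteq> j"
  shows "X $$ (Z_row j, i) = 0"
proof -
  have Xc: "X \<in> carrier_mat N n" using X by (simp add: reduced_form_def)
  have "(transpose_mat X * X) $$ (j, i) = (\<Sum>l<N. X $$ (l, j) * X $$ (l, i))"
    by (rule index_gram_mat_sum[OF Xc j(2) i(1)])
  also have "\<dots> = (\<Sum>l<N. if l = Z_row j then Z_val \<gamma> j * X $$ (l, i) else 0)"
    using X j by (intro sum.cong) (auto simp: reduced_form_Z_col)
  also have "\<dots> = Z_val \<gamma> j * X $$ (Z_row j, i)" using Z_row_less[OF j(2)] by simp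
  finally have "Z_val \<gamma> j * X $$ (Z_row j, i) = 0"
    using X gram_Z[OF j(2) i(1)] i(2) by (simp add: reduced_form_def)
  then show ?thesis using Z_val_pos[OF \<gamma>, of j] by simp
qed

lemma reduced_form_col_support:
  assumes X: "reduced_form \<gamma> m X" and \<gamma>: "0 < \<gamma>" and m: "1 \<le> m" "m \<le> n"
    and r: "r < N" "d \<le> r" "r \<noteq> d + m - 1"
  shows "X $$ (r, m - 1) = 0"
proof (cases "r < d + m - 1")
  case True
  define j where "j = r - d"
  have j: "j + 1 < m" "j < n" and "Z_row j = r"
    using True r m by (auto simp: j_def Z_row_def)
  then show ?thesis
    using reduced_form_orthogonal_row[OF X \<gamma> j, of "m - 1"] m by auto
next
  case False
  then show ?thesis using X m r by (auto simp: reduced_form_def)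
qed

lemma reduced_form_col_norm:
  assumes X: "reduced_form \<gamma> m X" and m: "1 \<le> m" "m \<le> n" and E: "E \<subseteq> {..<N}"
    and supp: "\<And>r. r < N \<Longrightarrow> r \<notin> E \<Longrightarrow> X $$ (r, m - 1) = 0"
  shows "(\<Sum>l\<in>E. X $$ (l, m - 1) * X $$ (l, m - 1)) = Z_val \<gamma> (m - 1) * Z_val \<gamma> (m - 1)"
proof -
  have Xc: "X \<in> carrier_mat N n" using X by (simp add: reduced_form_def)
  have j: "m - 1 < n" using m by simp
  have "(\<Sum>l\<in>E. X $$ (l, m - 1) * X $$ (l, m - 1)) = (\<Sum>l<N. X $$ (l, m - 1) * X $$ (l, m - 1))"
    by (rule sum.mono_neutral_left) (use E supp in auto)
  also have "\<dots> = (transpose_mat X * X) $$ (m - 1, m - 1)"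
    by (rule index_gram_mat_sum[symmetric, OF Xc j j])
  finally show ?thesis using X gram_Z[OF j j] by (simp add: reduced_form_def power2_eq_square)
qed

lemma reduced_form_embed_top:
  assumes \<phi>: "\<phi> \<in> \<Phi>"
  shows "reduced_form \<gamma> n (embed_mat N {..<d} id (Vd \<phi>) * Z \<gamma>)"
proof -
  interpret E: index_embedding N d "{..<d}" id id by (rule index_embedding_top)
  define X where "X = E.emb (Vd \<phi>) * Z \<gamma>"
  have W: "real_orthogonal d (Vd \<phi>)" by (rule ORP_orthogonal[OF orp_d \<phi>])
  have "X \<in> carrier_mat N n" unfolding X_def by (rule mult_carrier_mat[OF E.embed_carrier Z_carrier])
  moreover have "transpose_mat X * X = transpose_mat (Z \<gamma>) * Z \<gamma>"
    unfolding X_def by (rule real_orthogonal_gram_mult[OF E.real_orthogonal_embed[OF W] Z_carrier])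
  moreover have "X $$ (r, j) = Z \<gamma> $$ (r, j)" if j: "j + 1 < n" and r: "r < N" for j r
  proof -
    have "Z_row j = d + j" using j by (simp add: Z_row_def)
    then show ?thesis
      unfolding X_def using E.embed_mult_unit_col[OF Z_carrier _ r index_Z] j r by (auto simp: index_Z)
  qed
  ultimately have "reduced_form \<gamma> n X" unfolding reduced_form_def using d1 by auto
  then show ?thesis by (simp add: X_def)
qed

lemma reduced_form_embed_block:
  assumes \<gamma>: "0 < \<gamma>" and m: "1 \<le> m" "m < n"
    and \<theta>: "\<theta> \<in> \<Theta>" "0 < blkmu d (Vt \<theta>)" and Y: "reduced_form \<gamma> (Suc m) Y"
  shows "reduced_form \<gamma> m (embed_mat N (block_rows m) block_index (Vt \<theta>) * Y)"
proof -
  interpret E: index_embedding N "d + 1" "block_rows m" block_index "block_row m"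
    by (rule index_embedding_block[OF m])
  define X where "X = E.emb (Vt \<theta>) * Y"
  have W: "real_orthogonal (d + 1) (Vt \<theta>)" by (rule ORP_orthogonal[OF orp_t \<theta>(1)])
  have Yc: "Y \<in> carrier_mat N n"
    and Y_low: "\<And>j r. Suc m \<le> j + 1 \<Longrightarrow> j < n \<Longrightarrow> d + j < r \<Longrightarrow> r < N \<Longrightarrow> Y $$ (r, j) = 0"
    and Y_pos: "\<And>j. Suc m \<le> j + 1 \<Longrightarrow> j + 1 < n \<Longrightarrow> 0 < Y $$ (d + j, j)"
    using Y unfolding reduced_form_def by blast+
  have col: "(X $$ (r, j) = (if r \<in> block_rows m then (if Z_row j \<in> block_rows m
        then Vt \<theta> $$ (block_index r, block_index (Z_row j)) * Z_val \<gamma> j else 0)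
      else (if r = Z_row j then Z_val \<gamma> j else 0)))" if j: "j < m" and r: "r < N" for j r
    unfolding X_def using j m r
    by (intro E.embed_mult_unit_col[OF Yc _ r]) (auto simp: reduced_form_Z_col[OF Y])
  have unchanged: "X $$ (r, j) = Y $$ (r, j)" if "r \<notin> block_rows m" "r < N" "j < n" for j r
    unfolding X_def using E.index_embed_mult[OF Yc that(2,3)] that(1) by simp
  have last_col: "X $$ (r, m - 1) = (if r \<in> block_rows m then Vt \<theta> $$ (block_index r, d) * Z_val \<gamma> (m - 1) else 0)"
    if "r < N" for r
  proof -
    have "Z_row (m - 1) = d + m - 1" "block_index (d + m - 1) = d"
      using m by (auto simp: Z_row_def block_index_def)
    then show ?thesis using col[of "m - 1" r] that m by (simp add: block_rows_def)
  qed
  have "X \<in> carrier_mat N n" unfolding X_def by (rule mult_carrier_mat[OF E.embed_carrier Yc])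
  moreover have "transpose_mat X * X = transpose_mat (Z \<gamma>) * Z \<gamma>"
    using real_orthogonal_gram_mult[OF E.real_orthogonal_embed[OF W] Yc] Y
    unfolding X_def reduced_form_def by argo
  moreover have "X $$ (r, j) = Z \<gamma> $$ (r, j)" if "j + 1 < m" "r < N" for j r
  proof -
    have "Z_row j = d + j" "d + j \<notin> block_rows m" using that m by (auto simp: Z_row_def block_rows_def)
    then show ?thesis using col[of j r] index_Z[of r j] that m by simp
  qed
  moreover have "X $$ (r, j) = 0" if j: "m \<le> j + 1" "j < n" and r: "d + j < r" "r < N" for j r
  proof (cases "j + 1 = m")
    case True
    then show ?thesis using last_col[OF r(2)] r by (auto simp: block_rows_def)
  next
    case False
    then show ?thesis
      using unchanged[OF _ r(2) j(2)] Y_low[OF _ j(2) r] j r by (auto simp: block_rows_def)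
  qed
  moreover have "0 < X $$ (d + j, j)" if j: "m \<le> j + 1" "j + 1 < n" for j
  proof (cases "j + 1 = m")
    case True
    then have "X $$ (d + j, j) = blkmu d (Vt \<theta>) * Z_val \<gamma> (m - 1)"
      using last_col[of "d + j"] m by (auto simp: block_rows_def block_index_def blkmu_def)
    then show ?thesis using \<theta>(2) Z_val_pos[OF \<gamma>] by simp
  next
    case False
    then show ?thesis
      using unchanged[of "d + j" j] Y_pos[of j] j m by (auto simp: block_rows_def)
  qed
  ultimately have "reduced_form \<gamma> m X" unfolding reduced_form_def by (intro conjI allI impI)
  then show ?thesis by (simp add: X_def)
qed

lemma reduced_form_tail_prod:
  assumes \<gamma>: "0 < \<gamma>"
  shows "1 \<le> m \<Longrightarrow> m \<le> n \<Longrightarrow> admissible m th \<phi> \<Longrightarrow> reduced_form \<gamma> m (tail_prod m th \<phi> * Z \<gamma>)"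
proof (induction "n - m" arbitrary: m)
  case 0
  then have "m = n" by simp
  moreover have "\<phi> \<in> \<Phi>" using "0.prems"(3) by (simp add: admissible_def)
  ultimately show ?case using reduced_form_embed_top by (simp only: tail_prod_Z_last)
next
  case (Suc x)
  then have m: "1 \<le> m" "m < n" by auto
  then have "th (m - 1) \<in> \<Theta>" "0 < blkmu d (Vt (th (m - 1)))" "admissible (Suc m) th \<phi>"
    using Suc.prems(3) by (auto simp: admissible_def)
  moreover have "reduced_form \<gamma> (Suc m) (tail_prod (Suc m) th \<phi> * Z \<gamma>)" if "admissible (Suc m) th \<phi>"
    using Suc.hyps m that by simp
  ultimately show ?case
    unfolding tail_prod_Z_step[OF m] by (intro reduced_form_embed_block[OF \<gamma> m]) auto
qed

lemma tail_prod_Z_inj: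
  assumes \<gamma>: "0 < \<gamma>"
  shows "1 \<le> m \<Longrightarrow> m \<le> n \<Longrightarrow> admissible m th \<phi> \<Longrightarrow> admissible m th' \<phi>' \<Longrightarrow>
    tail_prod m th \<phi> * Z \<gamma> = tail_prod m th' \<phi>' * Z \<gamma> \<Longrightarrow>
    (\<forall>k. m \<le> k + 1 \<longrightarrow> k + 1 < n \<longrightarrow> th k = th' k) \<and> \<phi> = \<phi>'"
proof (induction "n - m" arbitrary: m)
  case 0
  then have "m = n" by simp
  have \<phi>: "\<phi> \<in> \<Phi>" "\<phi>' \<in> \<Phi>" using "0.prems"(3,4) by (auto simp: admissible_def)
  interpret E: index_embedding N d "{..<d}" id id by (rule index_embedding_top)
  have col: "Z \<gamma> $$ (r, n - 1) = (if r = id (d - 1) then 1 else 0)" if "r < N" for r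
    using index_Z[OF that, of "n - 1"] n2 by (simp add: Z_row_def Z_val_def)
  have "E.emb (Vd \<phi>) * Z \<gamma> = E.emb (Vd \<phi>') * Z \<gamma>"
    using "0.prems"(5) unfolding \<open>m = n\<close> tail_prod_Z_last .
  then have "\<phi> = \<phi>'"
    using E.ORP_embedded_unique[OF orp_d d1 order.refl \<phi> Z_carrier Z_carrier _ _ col col] n2 by simp
  then show ?case using \<open>m = n\<close> by simp
next
  case (Suc x)
  then have m: "1 \<le> m" "m < n" by auto
  interpret E: index_embedding N "d + 1" "block_rows m" block_index "block_row m"
    by (rule index_embedding_block[OF m])
  have adm: "admissible (Suc m) th \<phi>" "admissible (Suc m) th' \<phi>'"
    using Suc.prems(3,4) by (auto simp: admissible_def)
  have \<theta>: "th (m - 1) \<in> \<Theta>" "th' (m - 1) \<in> \<Theta>"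
    using Suc.prems(3,4) m by (auto simp: admissible_def)
  define Y where "Y = tail_prod (Suc m) th \<phi> * Z \<gamma>"
  define Y' where "Y' = tail_prod (Suc m) th' \<phi>' * Z \<gamma>"
  have red: "reduced_form \<gamma> (Suc m) Y" "reduced_form \<gamma> (Suc m) Y'"
    unfolding Y_def Y'_def using reduced_form_tail_prod[OF \<gamma>] m adm by auto
  have col: "Y $$ (r, m - 1) = (if r = block_row m (d + 1 - 1) then Z_val \<gamma> (m - 1) else 0)"
    "Y' $$ (r, m - 1) = (if r = block_row m (d + 1 - 1) then Z_val \<gamma> (m - 1) else 0)"
    if "r < N" for r
    using reduced_form_Z_col[OF red(1), of "m - 1" r] reduced_form_Z_col[OF red(2), of "m - 1" r] that m
    by (auto simp: Z_row_def block_row_def)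
  have Yc: "Y \<in> carrier_mat N n" "Y' \<in> carrier_mat N n"
    using red unfolding reduced_form_def by blast+
  have "E.emb (Vt (th (m - 1))) * Y = E.emb (Vt (th' (m - 1))) * Y'"
    using Suc.prems(5) unfolding Y_def Y'_def tail_prod_Z_step[OF m] .
  moreover have "m - 1 < n" "Z_val \<gamma> (m - 1) \<noteq> 0" using m Z_val_pos[OF \<gamma>, of "m - 1"] by auto
  ultimately have "th (m - 1) = th' (m - 1) \<and> Y = Y'"
    using E.ORP_embedded_unique[OF orp_t _ order.refl \<theta> Yc] col by simp
  moreover have "(\<forall>k. Suc m \<le> k + 1 \<longrightarrow> k + 1 < n \<longrightarrow> th k = th' k) \<and> \<phi> = \<phi>'" if "Y = Y'"
    using Suc.hyps(1)[of "Suc m"] Suc.hyps(2) m adm that unfolding Y_def Y'_def by simp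
  ultimately show ?case
    using m by (metis Suc_eq_plus1 Suc_leI le_eq_less_or_eq add_diff_cancel_right')
qed

lemma reduced_form_reduce_top:
  assumes \<gamma>: "0 < \<gamma>" and X: "reduced_form \<gamma> n X"
  obtains \<phi> where "\<phi> \<in> \<Phi>" "X = embed_mat N {..<d} id (Vd \<phi>) * Z \<gamma>"
proof -
  interpret E: index_embedding N d "{..<d}" id id by (rule index_embedding_top)
  have Xc: "X \<in> carrier_mat N n" using X unfolding reduced_form_def by blast
  have supp: "X $$ (r, n - 1) = 0" if "r < N" "r \<notin> {..<d}" for r
    using reduced_form_col_support[OF X \<gamma> _ order.refl that(1)] that n2 by auto
  have norm: "(\<Sum>l\<in>{..<d}. X $$ (l, n - 1) * X $$ (l, n - 1)) = 1 * 1"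
    using reduced_form_col_norm[OF X _ order.refl E.subset supp] n2 by (simp add: Z_val_def)
  have "n - 1 < n" using n2 by simp
  obtain \<phi> where \<phi>: "\<phi> \<in> \<Phi>"
    and "\<And>r. r \<in> {..<d} \<Longrightarrow> X $$ (r, n - 1) = 1 * Vd \<phi> $$ (id r, d - 1)"
    and last_col: "\<And>r. r < N \<Longrightarrow> (E.emb (transpose_mat (Vd \<phi>)) * X) $$ (r, n - 1) = (if r = id (d - 1) then 1 else 0)"
    by (rule E.ORP_embedded_reduction[OF orp_d d1 le_refl Xc \<open>n - 1 < n\<close> supp norm]) auto
  have W: "real_orthogonal d (Vd \<phi>)" by (rule ORP_orthogonal[OF orp_d \<phi>])
  have "E.emb (transpose_mat (Vd \<phi>)) * X = Z \<gamma>"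
  proof (rule eq_matI)
    fix r j assume "r < dim_row (Z \<gamma>)" "j < dim_col (Z \<gamma>)"
    then have r: "r < N" and j: "j < n" using carrier_matD[OF Z_carrier[of \<gamma>]] by auto
    show "(E.emb (transpose_mat (Vd \<phi>)) * X) $$ (r, j) = Z \<gamma> $$ (r, j)"
    proof (cases "j = n - 1")
      case True
      then show ?thesis using last_col[OF r] index_Z[OF r j] n2 by (simp add: Z_row_def Z_val_def)
    next
      case False
      then have "j + 1 < n" "Z_row j = d + j" using j by (auto simp: Z_row_def)
      then show ?thesis
        using E.embed_mult_unit_col[OF Xc j r reduced_form_Z_col[OF X]] index_Z[OF r j] j by auto
    qed
  qed (use Xc carrier_matD[OF Z_carrier[of \<gamma>]] carrier_matD[OF E.embed_carrier] in auto)
  moreover have "transpose_mat (E.emb (Vd \<phi>)) = E.emb (transpose_mat (Vd \<phi>))"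
    by (rule E.embed_transpose) (use W in \<open>simp add: real_orthogonal_def\<close>)
  ultimately have "X = E.emb (Vd \<phi>) * Z \<gamma>"
    using real_orthogonal_mult_transpose_mult[OF E.real_orthogonal_embed[OF W] Xc] by simp
  then show thesis using that \<phi> by blast
qed

lemma reduced_form_reduce_block:
  assumes \<gamma>: "0 < \<gamma>" and m: "1 \<le> m" "m < n" and X: "reduced_form \<gamma> m X"
  obtains \<theta> where "\<theta> \<in> \<Theta>" "0 < blkmu d (Vt \<theta>)"
    "reduced_form \<gamma> (Suc m) (embed_mat N (block_rows m) block_index (transpose_mat (Vt \<theta>)) * X)"
proof -
  interpret E: index_embedding N "d + 1" "block_rows m" block_index "block_row m"
    by (rule index_embedding_block[OF m])
  have Xc: "X \<in> carrier_mat N n"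
    and X_gram: "transpose_mat X * X = transpose_mat (Z \<gamma>) * Z \<gamma>"
    and X_low: "\<And>j r. m \<le> j + 1 \<Longrightarrow> j < n \<Longrightarrow> d + j < r \<Longrightarrow> r < N \<Longrightarrow> X $$ (r, j) = 0"
    and X_pos: "\<And>j. m \<le> j + 1 \<Longrightarrow> j + 1 < n \<Longrightarrow> 0 < X $$ (d + j, j)"
    using X unfolding reduced_form_def by blast+
  define a where "a = Z_val \<gamma> (m - 1)"
  have a: "0 < a" unfolding a_def by (rule Z_val_pos[OF \<gamma>])
  have j: "m - 1 < n" using m by simp
  have supp: "X $$ (r, m - 1) = 0" if "r < N" "r \<notin> block_rows m" for r
    using reduced_form_col_support[OF X \<gamma> m(1) _ that(1)] that m by (auto simp: block_rows_def)
  have norm: "(\<Sum>l\<in>block_rows m. X $$ (l, m - 1) * X $$ (l, m - 1)) = a * a"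
    unfolding a_def using reduced_form_col_norm[OF X m(1) _ E.subset supp] m by simp
  obtain \<theta> where \<theta>: "\<theta> \<in> \<Theta>"
    and old_col: "\<And>r. r \<in> block_rows m \<Longrightarrow> X $$ (r, m - 1) = a * Vt \<theta> $$ (block_index r, d + 1 - 1)"
    and new_col: "\<And>r. r < N \<Longrightarrow> (E.emb (transpose_mat (Vt \<theta>)) * X) $$ (r, m - 1) =
      (if r = block_row m (d + 1 - 1) then a else 0)"
    by (rule E.ORP_embedded_reduction[OF orp_t _ le_refl Xc j supp norm a]) auto
  have "d + (m - 1) \<in> block_rows m" "block_index (d + (m - 1)) = d"
    using m by (auto simp: block_rows_def block_index_def)
  then have "X $$ (d + (m - 1), m - 1) = a * blkmu d (Vt \<theta>)"
    using old_col[of "d + (m - 1)"] by (simp add: blkmu_def)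
  then have \<mu>: "0 < blkmu d (Vt \<theta>)"
    using X_pos[of "m - 1"] m a by (simp add: zero_less_mult_iff)
  define X' where "X' = E.emb (transpose_mat (Vt \<theta>)) * X"
  have WT: "real_orthogonal (d + 1) (transpose_mat (Vt \<theta>))"
    by (rule real_orthogonal_transpose[OF ORP_orthogonal[OF orp_t \<theta>]])
  have unchanged: "X' $$ (r, j) = X $$ (r, j)" if "r \<notin> block_rows m" "r < N" "j < n" for j r
    unfolding X'_def using E.index_embed_mult[OF Xc that(2,3)] that(1) by simp
  have "X' \<in> carrier_mat N n" unfolding X'_def by (rule mult_carrier_mat[OF E.embed_carrier Xc])
  moreover have "transpose_mat X' * X' = transpose_mat (Z \<gamma>) * Z \<gamma>"
    unfolding X'_def real_orthogonal_gram_mult[OF E.real_orthogonal_embed[OF WT] Xc] by (rule X_gram)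
  moreover have "X' $$ (r, j) = Z \<gamma> $$ (r, j)" if j: "j + 1 < Suc m" and r: "r < N" for j r
  proof (cases "j + 1 < m")
    case True
    then have "Z_row j = d + j" "d + j \<notin> block_rows m" using m by (auto simp: Z_row_def block_rows_def)
    then show ?thesis
      using E.embed_mult_unit_col[OF Xc _ r reduced_form_Z_col[OF X True]] index_Z[OF r] True m
      unfolding X'_def by auto
  next
    case False
    then have "j = m - 1" "Z_row (m - 1) = block_row m d" using j m by (auto simp: Z_row_def block_row_def)
    then show ?thesis using new_col[OF r] index_Z[OF r, of "m - 1"] m unfolding X'_def a_def by simp
  qed
  moreover have "X' $$ (r, j) = 0" if "Suc m \<le> j + 1" "j < n" "d + j < r" "r < N" for j r
    using unchanged[of r j] X_low[of j r] that by (auto simp: block_rows_def)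
  moreover have "0 < X' $$ (d + j, j)" if "Suc m \<le> j + 1" "j + 1 < n" for j
    using unchanged[of "d + j" j] X_pos[of j] that m by (auto simp: block_rows_def)
  ultimately have "reduced_form \<gamma> (Suc m) X'" unfolding reduced_form_def by (intro conjI allI impI)
  then show thesis using that[OF \<theta> \<mu>] by (simp add: X'_def)
qed

lemma tail_prod_Z_surj:
  assumes \<gamma>: "0 < \<gamma>"
  shows "1 \<le> m \<Longrightarrow> m \<le> n \<Longrightarrow> reduced_form \<gamma> m X \<Longrightarrow>
    \<exists>th \<phi>. admissible m th \<phi> \<and> tail_prod m th \<phi> * Z \<gamma> = X"
proof (induction "n - m" arbitrary: m X)
  case 0
  then have "m = n" by simp
  then obtain \<phi> where "\<phi> \<in> \<Phi>" "X = embed_mat N {..<d} id (Vd \<phi>) * Z \<gamma>"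
    using reduced_form_reduce_top[OF \<gamma>] "0.prems"(3) by blast
  then have "admissible m th \<phi> \<and> tail_prod m th \<phi> * Z \<gamma> = X" for th
    using \<open>m = n\<close> by (simp add: admissible_def tail_prod_Z_last)
  then show ?case by blast
next
  case (Suc x)
  then have m: "1 \<le> m" "m < n" by auto
  interpret E: index_embedding N "d + 1" "block_rows m" block_index "block_row m"
    by (rule index_embedding_block[OF m])
  obtain \<theta> where \<theta>: "\<theta> \<in> \<Theta>" "0 < blkmu d (Vt \<theta>)"
    and red: "reduced_form \<gamma> (Suc m) (E.emb (transpose_mat (Vt \<theta>)) * X)"
    using reduced_form_reduce_block[OF \<gamma> m Suc.prems(3)] by blast
  have "\<exists>th \<phi>. admissible (Suc m) th \<phi> \<and> tail_prod (Suc m) th \<phi> * Z \<gamma> = E.emb (transpose_mat (Vt \<theta>)) * X"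
    by (rule Suc.hyps(1)) (use Suc.hyps(2) m red in auto)
  then obtain th \<phi> where adm: "admissible (Suc m) th \<phi>"
    and eq: "tail_prod (Suc m) th \<phi> * Z \<gamma> = E.emb (transpose_mat (Vt \<theta>)) * X"
    by blast
  define th' where "th' = th(m - 1 := \<theta>)"
  have "tail_prod (Suc m) th' \<phi> = tail_prod (Suc m) th \<phi>"
    by (rule tail_prod_cong) (use m in \<open>auto simp: th'_def\<close>)
  then have "tail_prod m th' \<phi> * Z \<gamma> = E.emb (Vt \<theta>) * (E.emb (transpose_mat (Vt \<theta>)) * X)"
    unfolding tail_prod_Z_step[OF m] using eq by (simp add: th'_def)
  also have "\<dots> = X"
  proof -
    have W: "real_orthogonal (d + 1) (Vt \<theta>)" by (rule ORP_orthogonal[OF orp_t \<theta>(1)])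
    have "transpose_mat (E.emb (Vt \<theta>)) = E.emb (transpose_mat (Vt \<theta>))"
      by (rule E.embed_transpose) (use W in \<open>simp add: real_orthogonal_def\<close>)
    moreover have "X \<in> carrier_mat N n" using Suc.prems(3) unfolding reduced_form_def by blast
    ultimately show ?thesis
      using real_orthogonal_mult_transpose_mult[OF E.real_orthogonal_embed[OF W]] by metis
  qed
  finally have "tail_prod m th' \<phi> * Z \<gamma> = X" .
  moreover have "admissible m th' \<phi>"
    using adm \<theta> m unfolding admissible_def th'_def
    by (metis Suc_eq_plus1 Suc_leI fun_upd_apply le_eq_less_or_eq add_diff_cancel_right')
  ultimately show ?case by blast
qed

definition A_of :: "real mat \<Rightarrow> real mat" where
  "A_of X = mat n n (\<lambda>(i, j). X $$ (d - 1 + i, j))"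

definition C_of :: "real \<Rightarrow> real mat \<Rightarrow> real mat" where
  "C_of \<gamma> X = mat d n (\<lambda>(i, j). if i = 0 then (if j = 0 then sqrt (1 - \<gamma>\<^sup>2) else 0) else X $$ (i - 1, j))"

lemma assign_eq:
  "assign n d Vt Vd (\<gamma>, ths, \<phi>) =
     (A_of (tail_prod 1 ((!) ths) \<phi> * Z \<gamma>), C_of \<gamma> (tail_prod 1 ((!) ths) \<phi> * Z \<gamma>))"
  unfolding assign_def stacked_def tail_prod_def Z_def A_of_def C_of_def Let_def prod.case by (rule refl)

lemma gram_A_of_C_of:
  assumes Xc: "X \<in> carrier_mat N n" and i: "i < n" and j: "j < n"
  shows "(transpose_mat (A_of X) * A_of X) $$ (i, j) + (transpose_mat (C_of \<gamma> X) * C_of \<gamma> X) $$ (i, j)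
     = (transpose_mat X * X) $$ (i, j) + C_of \<gamma> X $$ (0, i) * C_of \<gamma> X $$ (0, j)"
proof -
  define e where "e = d - 1"
  have de: "d = Suc e" and Ne: "N = e + n" using d1 by (auto simp: e_def)
  define f where "f l = X $$ (l, i) * X $$ (l, j)" for l
  have "(transpose_mat (A_of X) * A_of X) $$ (i, j) = (\<Sum>l<n. f (e + l))"
    using index_gram_mat_sum[of "A_of X" n n i j] i j by (simp add: A_of_def f_def e_def)
  moreover have "(transpose_mat (C_of \<gamma> X) * C_of \<gamma> X) $$ (i, j)
      = C_of \<gamma> X $$ (0, i) * C_of \<gamma> X $$ (0, j) + (\<Sum>l<e. f l)"
  proof -
    have "C_of \<gamma> X \<in> carrier_mat (Suc e) n" unfolding de[symmetric] C_of_def by (rule mat_carrier)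
    moreover have "(\<Sum>l<e. C_of \<gamma> X $$ (Suc l, i) * C_of \<gamma> X $$ (Suc l, j)) = (\<Sum>l<e. f l)"
      by (rule sum.cong) (use i j d1 in \<open>auto simp: C_of_def f_def e_def\<close>)
    ultimately show ?thesis
      using index_gram_mat_sum[of "C_of \<gamma> X" "Suc e" n i j] i j
      unfolding sum.lessThan_Suc_shift by simp
  qed
  moreover have "(transpose_mat X * X) $$ (i, j) = (\<Sum>l<e. f l) + (\<Sum>l<n. f (e + l))"
    using index_gram_mat_sum[OF Xc i j] unfolding Ne sum_lessThan_add by (simp add: f_def)
  ultimately show ?thesis by simp
qed

lemma C_of_first_row: "j < n \<Longrightarrow> C_of \<gamma> X $$ (0, j) = (if j = 0 then sqrt (1 - \<gamma>\<^sup>2) else 0)"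
  using d1 by (simp add: C_of_def)

lemma strict_HOON_of_reduced_form:
  assumes X: "reduced_form \<gamma> 1 X" and \<gamma>: "0 < \<gamma>" "\<gamma> < 1"
  shows "strict_HOON n d (A_of X) (C_of \<gamma> X)"
proof -
  have Xc: "X \<in> carrier_mat N n"
    and X_gram: "transpose_mat X * X = transpose_mat (Z \<gamma>) * Z \<gamma>"
    and X_low: "\<And>j r. j < n \<Longrightarrow> d + j < r \<Longrightarrow> r < N \<Longrightarrow> X $$ (r, j) = 0"
    and X_pos: "\<And>j. j + 1 < n \<Longrightarrow> 0 < X $$ (d + j, j)"
    using X unfolding reduced_form_def by auto
  have Ac: "A_of X \<in> carrier_mat n n" unfolding A_of_def by (rule mat_carrier)
  have Cc: "C_of \<gamma> X \<in> carrier_mat d n" unfolding C_of_def by (rule mat_carrier)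
  have \<gamma>2: "\<gamma>\<^sup>2 < 1" using \<gamma> by (simp add: power_less_one_iff)
  have "upper_hessenberg (A_of X)"
    unfolding upper_hessenberg_def using Ac X_low d1 by (auto simp: A_of_def)
  moreover have "transpose_mat (A_of X) * A_of X = 1\<^sub>m n - transpose_mat (C_of \<gamma> X) * C_of \<gamma> X"
  proof (rule eq_matI)
    fix i j assume "i < dim_row (1\<^sub>m n - transpose_mat (C_of \<gamma> X) * C_of \<gamma> X)"
      "j < dim_col (1\<^sub>m n - transpose_mat (C_of \<gamma> X) * C_of \<gamma> X)"
    then have i: "i < n" and j: "j < n" using Cc by auto
    have "(transpose_mat X * X) $$ (i, j) + C_of \<gamma> X $$ (0, i) * C_of \<gamma> X $$ (0, j) = (if i = j then 1 else 0)"
      using X_gram gram_Z[OF i j] \<gamma>2 i j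
      by (auto simp: C_of_first_row Z_val_def power2_eq_square[symmetric])
    then show "(transpose_mat (A_of X) * A_of X) $$ (i, j)
        = (1\<^sub>m n - transpose_mat (C_of \<gamma> X) * C_of \<gamma> X) $$ (i, j)"
      using gram_A_of_C_of[OF Xc i j, of \<gamma>] i j Cc by simp
  qed (use Ac Cc in auto)
  moreover have "0 < A_of X $$ (i + 1, i)" if "i + 1 < n" for i
    using X_pos[OF that] that d1 by (simp add: A_of_def)
  moreover have "C_of \<gamma> X $$ (0, 0) = sqrt (1 - \<gamma>\<^sup>2)" using n2 by (simp add: C_of_first_row)
  ultimately show ?thesis
    unfolding strict_HOON_def HOON_def using Ac Cc \<gamma> \<gamma>2 by (auto simp: C_of_first_row)
qed

lemma reduced_form_of_strict_HOON:
  assumes "strict_HOON n d A C"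
  obtains \<gamma> X where "0 < \<gamma>" "\<gamma> < 1" "reduced_form \<gamma> 1 X" "A = A_of X" "C = C_of \<gamma> X"
proof -
  have Ac: "A \<in> carrier_mat n n" and Cc: "C \<in> carrier_mat d n" and hess: "upper_hessenberg A"
    and C0: "\<And>j. 0 < j \<Longrightarrow> j < n \<Longrightarrow> C $$ (0, j) = 0"
    and gram: "transpose_mat A * A = 1\<^sub>m n - transpose_mat C * C"
    and sub: "\<And>i. i + 1 < n \<Longrightarrow> 0 < A $$ (i + 1, i)" and c: "0 < C $$ (0, 0)" "C $$ (0, 0) < 1"
    using assms unfolding strict_HOON_def HOON_def by auto
  define \<gamma> where "\<gamma> = sqrt (1 - (C $$ (0, 0))\<^sup>2)"
  have c2: "(C $$ (0, 0))\<^sup>2 < 1" using c by (simp add: power_less_one_iff)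
  have \<gamma>: "0 < \<gamma>" "\<gamma> < 1" using c c2 by (auto simp: \<gamma>_def)
  have \<gamma>2: "\<gamma>\<^sup>2 = 1 - (C $$ (0, 0))\<^sup>2" using c2 by (simp add: \<gamma>_def)
  have sq: "sqrt (1 - \<gamma>\<^sup>2) = C $$ (0, 0)" using \<gamma>2 c by simp
  define X where "X = mat N n (\<lambda>(r, j). if r < d - 1 then C $$ (r + 1, j) else A $$ (r - (d - 1), j))"
  have Xc: "X \<in> carrier_mat N n" unfolding X_def by (rule mat_carrier)
  have AX: "A = A_of X"
    using Ac d1 by (intro eq_matI) (auto simp: A_of_def X_def)
  have CX: "C = C_of \<gamma> X"
  proof (rule eq_matI)
    fix i j assume "i < dim_row (C_of \<gamma> X)" "j < dim_col (C_of \<gamma> X)"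
    then have i: "i < d" and j: "j < n" by (auto simp: C_of_def)
    show "C $$ (i, j) = C_of \<gamma> X $$ (i, j)"
      using i j n2 sq C0 by (cases "i = 0") (auto simp: C_of_def X_def)
  qed (use Cc in \<open>auto simp: C_of_def\<close>)
  have "transpose_mat X * X = transpose_mat (Z \<gamma>) * Z \<gamma>"
  proof (rule eq_matI)
    fix i j assume "i < dim_row (transpose_mat (Z \<gamma>) * Z \<gamma>)" "j < dim_col (transpose_mat (Z \<gamma>) * Z \<gamma>)"
    then have i: "i < n" and j: "j < n" using carrier_matD[OF Z_carrier[of \<gamma>]] by auto
    have "(transpose_mat A * A) $$ (i, j) + (transpose_mat C * C) $$ (i, j) = (if i = j then 1 else 0)"
      using gram i j Cc by simp
    moreover have "C $$ (0, i) * C $$ (0, j) = (if i = 0 \<and> j = 0 then (C $$ (0, 0))\<^sup>2 else 0)"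
      using C0 i j by (auto simp: power2_eq_square)
    ultimately show "(transpose_mat X * X) $$ (i, j) = (transpose_mat (Z \<gamma>) * Z \<gamma>) $$ (i, j)"
      using gram_A_of_C_of[OF Xc i j, of \<gamma>] gram_Z[OF i j] \<gamma>2
      unfolding AX[symmetric] CX[symmetric] by (auto simp: Z_val_def)
  qed (use Xc carrier_matD[OF Z_carrier[of \<gamma>]] in auto)
  moreover have "X $$ (r, j) = 0" if "j < n" "d + j < r" "r < N" for j r
    using hess Ac that d1 unfolding upper_hessenberg_def by (auto simp: X_def)
  moreover have "0 < X $$ (d + j, j)" if "j + 1 < n" for j
    using sub[OF that] that d1 by (auto simp: X_def)
  ultimately have "reduced_form \<gamma> 1 X" unfolding reduced_form_def using Xc by auto
  then show thesis using that \<gamma> AX CX by blast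
qed

lemma A_of_C_of_inj:
  assumes X: "X \<in> carrier_mat N n" "X' \<in> carrier_mat N n" and \<gamma>: "0 < \<gamma>" "0 < \<gamma>'"
    and A: "A_of X = A_of X'" and C: "C_of \<gamma> X = C_of \<gamma>' X'"
  shows "\<gamma> = \<gamma>' \<and> X = X'"
proof
  have "sqrt (1 - \<gamma>\<^sup>2) = sqrt (1 - \<gamma>'\<^sup>2)"
    using arg_cong[OF C, of "\<lambda>M. M $$ (0, 0)"] n2 by (simp add: C_of_first_row)
  then show "\<gamma> = \<gamma>'" using \<gamma> by (simp add: power2_eq_iff_nonneg)
  show "X = X'"
  proof (rule eq_matI)
    fix r j assume "r < dim_row X'" "j < dim_col X'"
    then have r: "r < N" and j: "j < n" using X by auto
    show "X $$ (r, j) = X' $$ (r, j)"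
    proof (cases "r < d - 1")
      case True
      then show ?thesis using arg_cong[OF C, of "\<lambda>M. M $$ (r + 1, j)"] j by (simp add: C_of_def)
    next
      case False
      then show ?thesis using arg_cong[OF A, of "\<lambda>M. M $$ (r - (d - 1), j)"] r j by (simp add: A_of_def)
    qed
  qed (use X in auto)
qed

definition param_domain :: "(real \<times> real vec list \<times> real vec) set" where
  "param_domain = {(\<gamma>, ths, \<phi>). 0 < \<gamma> \<and> \<gamma> < 1 \<and> length ths = n - 1 \<and>
     (\<forall>k < n - 1. ths ! k \<in> \<Theta> \<and> blkmu d (Vt (ths ! k)) > 0) \<and> \<phi> \<in> \<Phi>}"

lemma param_domain_admissible:
  "(\<gamma>, ths, \<phi>) \<in> param_domain \<Longrightarrow> admissible 1 ((!) ths) \<phi>"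
  by (auto simp: param_domain_def admissible_def)

lemma assign_strict_HOON:
  assumes t: "(\<gamma>, ths, \<phi>) \<in> param_domain"
  shows "case assign n d Vt Vd (\<gamma>, ths, \<phi>) of (A, C) \<Rightarrow> strict_HOON n d A C"
proof -
  have \<gamma>: "0 < \<gamma>" "\<gamma> < 1" using t by (auto simp: param_domain_def)
  have "reduced_form \<gamma> 1 (tail_prod 1 ((!) ths) \<phi> * Z \<gamma>)"
    by (rule reduced_form_tail_prod[OF \<gamma>(1) _ _ param_domain_admissible[OF t]]) (use n2 in auto)
  then show ?thesis
    using strict_HOON_of_reduced_form[OF _ \<gamma>] unfolding assign_eq by simp
qed

lemma assign_inj:
  assumes t: "(\<gamma>, ths, \<phi>) \<in> param_domain" and t': "(\<gamma>', ths', \<phi>') \<in> param_domain"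
    and eq: "assign n d Vt Vd (\<gamma>, ths, \<phi>) = assign n d Vt Vd (\<gamma>', ths', \<phi>')"
  shows "\<gamma> = \<gamma>' \<and> ths = ths' \<and> \<phi> = \<phi>'"
proof -
  have \<gamma>: "0 < \<gamma>" "0 < \<gamma>'" using t t' by (auto simp: param_domain_def)
  have "\<gamma> = \<gamma>' \<and> tail_prod 1 ((!) ths) \<phi> * Z \<gamma> = tail_prod 1 ((!) ths') \<phi>' * Z \<gamma>'"
    using eq unfolding assign_eq
    by (intro A_of_C_of_inj[OF mult_carrier_mat[OF tail_prod_carrier Z_carrier]
          mult_carrier_mat[OF tail_prod_carrier Z_carrier] \<gamma>]) auto
  then have "\<gamma> = \<gamma>'" and nth: "\<forall>k. k + 1 < n \<longrightarrow> ths ! k = ths' ! k" and "\<phi> = \<phi>'"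
    using tail_prod_Z_inj[OF \<gamma>(1) _ _ param_domain_admissible[OF t] param_domain_admissible[OF t']] n2
    by auto
  moreover have "ths = ths'"
    using t t' nth by (auto simp: param_domain_def intro: nth_equalityI)
  ultimately show ?thesis by simp
qed

lemma strict_HOON_assign_image:
  assumes "strict_HOON n d A C"
  shows "(A, C) \<in> assign n d Vt Vd ` param_domain"
proof -
  obtain \<gamma> X where \<gamma>: "0 < \<gamma>" "\<gamma> < 1" and X: "reduced_form \<gamma> 1 X"
    and AC: "A = A_of X" "C = C_of \<gamma> X"
    using assms by (rule reduced_form_of_strict_HOON)
  have "\<exists>th \<phi>. admissible 1 th \<phi> \<and> tail_prod 1 th \<phi> * Z \<gamma> = X"
    by (rule tail_prod_Z_surj[OF \<gamma>(1) _ _ X]) (use n2 in auto)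
  then obtain th \<phi> where adm: "admissible 1 th \<phi>" and T: "tail_prod 1 th \<phi> * Z \<gamma> = X"
    by blast
  define ths where "ths = map th [0..<n - 1]"
  have "(\<gamma>, ths, \<phi>) \<in> param_domain"
    using \<gamma> adm by (auto simp: param_domain_def admissible_def ths_def)
  moreover have "tail_prod 1 ((!) ths) \<phi> = tail_prod 1 th \<phi>"
    by (rule tail_prod_cong) (simp add: ths_def)
  then have "assign n d Vt Vd (\<gamma>, ths, \<phi>) = (A, C)"
    using T AC unfolding assign_eq by simp
  ultimately show ?thesis by (metis image_eqI)
qed

lemma assign_bij: "bij_betw (assign n d Vt Vd) param_domain {(A, C). strict_HOON n d A C}"
proof -
  have "inj_on (assign n d Vt Vd) param_domain"
    using assign_inj by (intro inj_onI) (metis prod_cases3)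
  moreover have "assign n d Vt Vd ` param_domain = {(A, C). strict_HOON n d A C}"
    using assign_strict_HOON strict_HOON_assign_image by fastforce
  ultimately show ?thesis by (simp add: bij_betw_def)
qed

end

theorem theorem7p4:
  fixes n d :: nat
    and Vt :: "real vec \<Rightarrow> real mat" and \<Theta> :: "real vec set"
    and Vd :: "real vec \<Rightarrow> real mat" and \<Phi> :: "real vec set"
  assumes "n \<ge> 2" and "1 \<le> d" and "d \<le> n"
    and "ORP (d + 1) (d + 1) Vt \<Theta>"
    and "ORP d d Vd \<Phi>"
  shows "bij_betw (assign n d Vt Vd)
           {(\<gamma>, ths, \<phi>). 0 < \<gamma> \<and> \<gamma> < 1 \<and> length ths = n - 1 \<and>
              (\<forall>k < n - 1. ths ! k \<in> \<Theta> \<and> blkmu d (Vt (ths ! k)) > 0) \<and> \<phi> \<in> \<Phi>}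
           {(A, C). strict_HOON n d A C}"
proof -
  interpret hoon_parameterization n d Vt \<Theta> Vd \<Phi>
    using assms by unfold_locales auto
  show ?thesis using assign_bij unfolding param_domain_def .
qed

end
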